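(* Let $P$ be a product rule. The $P$-product $*$ on $\mathbb Q\langle\langle\Sigma\rangle\rangle$ is bilinear, associative and commutative (BAC) if and only if $P$ is special, i.e. if and only if the following identities hold (where $\approx$ is term equivalence): \[ P(x+y,\dot x+\dot y,z,\dot z)\approx P(x,\dot x,z,\dot z)+P(y,\dot y,z,\dot z),\] \[ P(x,\dot x,\,y*z,\,P(y,\dot y,z,\dot z))\approx P(x*y,\,P(x,\dot x,y,\dot y),\,z,\dot z),\] \[ P(x,\dot x,y,\dot y)\approx P(y,\dot y,x,\dot x).\]
   Context: Let $\Sigma$ be a finite alphabet, $\Sigma^*$ the set of finite words with empty word $\varepsilon$. A series is a function $f:\Sigma^*\to\mathbb Q$; write $f_w=f(w)$; the set of series $\mathbb Q\langle\langle\Sigma\rangle\rangle$ is a $\mathbb Q$-vector space under pointwise scalar multiplication and addition, with zero series $\mathbb 0$. For $a\in\Sigma$ the left derivative $\delta_a f$ is the series $w\mapsto f(aw)$. Terms: for a set $X$ of variables, $\mathrm{Terms}(X)$ is the set of syntactic terms generated by $u,v::=x\mid 0\mid c\cdot u\mid u+v\mid u*v$ ($x\in X$, $c\in\mathbb Q$), with no identities imposed. A product rule is a term $P\in\mathrm{Terms}(\{x,\dot x,y,\dot y\})$; $P(s_1,s_2,s_3,s_4)$ denotes simultaneous substitution of $s_1,\dots,s_4$ for $x,\dot x,y,\dot y$. $P$-product: given a product rule $P$, the $P$-product $*$ on series and the semantics $[\![u]\!]_\varrho\in\mathbb Q\langle\langle\Sigma\rangle\rangle$ of terms $u$ under valuations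 $\varrho:X\to\mathbb Q\langle\langle\Sigma\rangle\rangle$ are the unique pair satisfying: $(f*g)_\varepsilon=f_\varepsilon g_\varepsilon$ and $\delta_a(f*g)=[\![P]\!]_{[x\mapsto f,\dot x\mapsto\delta_af,y\mapsto g,\dot y\mapsto\delta_ag]}$ for all $a\in\Sigma$ and series $f,g$; and $[\![0]\!]_\varrho=\mathbb 0$, $[\![x]\!]_\varrho=\varrho(x)$, $[\![c\cdot u]\!]_\varrho=c\cdot[\![u]\!]_\varrho$, $[\![u+v]\!]_\varrho=[\![u]\!]_\varrho+[\![v]\!]_\varrho$, $[\![u*v]\!]_\varrho=[\![u]\!]_\varrho*[\![v]\!]_\varrho$. BAC: the product is BAC if for all series $f,g,h$ and $c\in\mathbb Q$: $(f+g)*h=f*h+g*h$, $(c\cdot f)*g=c\cdot(f*g)$, $f*(g*h)=(f*g)*h$, $f*g=g*f$. Term equivalence: $u\approx v$ iff $u$ and $v$ denote the same polynomial of the commutative polynomial ring $\mathbb Q[X]$ when $0,c\cdot,+,*$ are read as the zero polynomial, scalar multiplication, addition and multiplication of polynomials (equivalently, $\approx$ is the smallest congruence on terms generated by the axioms of commutative, not necessarily unital, $\mathbb Q$-algebras). *)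

theory Defs
  imports Complex_Main "HOL-Library.Poly_Mapping"
begin

text \<open>The alphabet Sigma is a type variable of class finite (types are nonempty).
  A series is a function from words (lists) to rationals.\<close>

type_synonym 'a series = "'a list \<Rightarrow> rat"

definition zero_series :: "'a series" where
  "zero_series = (\<lambda>w. 0)"

definition add_series :: "'a series \<Rightarrow> 'a series \<Rightarrow> 'a series" where
  "add_series f g = (\<lambda>w. f w + g w)"

definition smult_series :: "rat \<Rightarrow> 'a series \<Rightarrow> 'a series" where
  "smult_series c f = (\<lambda>w. c * f w)"

definition lderiv :: "'a \<Rightarrow> 'a series \<Rightarrow> 'a series" where
  "lderiv a f = (\<lambda>w. f (a # w))"

datatype 'v trm =
    Var 'v
  | Zero
  | Scal rat "'v trm"
  | Plus "'v trm" "'v trm"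
  | Times "'v trm" "'v trm"

primrec subst :: "('v \<Rightarrow> 'w trm) \<Rightarrow> 'v trm \<Rightarrow> 'w trm" where
  "subst s (Var v) = s v"
| "subst s Zero = Zero"
| "subst s (Scal c u) = Scal c (subst s u)"
| "subst s (Plus u v) = Plus (subst s u) (subst s v)"
| "subst s (Times u v) = Times (subst s u) (subst s v)"

datatype pvar = PX | PDX | PY | PDY

type_synonym prule = "pvar trm"

definition inst :: "prule \<Rightarrow> 'w trm \<Rightarrow> 'w trm \<Rightarrow> 'w trm \<Rightarrow> 'w trm \<Rightarrow> 'w trm" where
  "inst P s1 s2 s3 s4 = subst (\<lambda>v. case v of PX \<Rightarrow> s1 | PDX \<Rightarrow> s2 | PY \<Rightarrow> s3 | PDY \<Rightarrow> s4) P"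

primrec sem :: "('a series \<Rightarrow> 'a series \<Rightarrow> 'a series) \<Rightarrow> ('v \<Rightarrow> 'a series) \<Rightarrow> 'v trm \<Rightarrow> 'a series" where
  "sem m \<rho> (Var v) = \<rho> v"
| "sem m \<rho> Zero = zero_series"
| "sem m \<rho> (Scal c u) = smult_series c (sem m \<rho> u)"
| "sem m \<rho> (Plus u v) = add_series (sem m \<rho> u) (sem m \<rho> v)"
| "sem m \<rho> (Times u v) = m (sem m \<rho> u) (sem m \<rho> v)"

definition is_Pproduct :: "prule \<Rightarrow> ('a series \<Rightarrow> 'a series \<Rightarrow> 'a series) \<Rightarrow> bool" where
  "is_Pproduct P m \<longleftrightarrow>
     (\<forall>f g. m f g [] = f [] * g []) \<and>
     (\<forall>a f g. lderiv a (m f g) =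
        sem m (\<lambda>v. case v of PX \<Rightarrow> f | PDX \<Rightarrow> lderiv a f | PY \<Rightarrow> g | PDY \<Rightarrow> lderiv a g) P)"

definition Pproduct :: "prule \<Rightarrow> 'a series \<Rightarrow> 'a series \<Rightarrow> 'a series" where
  "Pproduct P = (THE m. is_Pproduct P m)"

definition BAC :: "('a series \<Rightarrow> 'a series \<Rightarrow> 'a series) \<Rightarrow> bool" where
  "BAC m \<longleftrightarrow>
     (\<forall>f g h. m (add_series f g) h = add_series (m f h) (m g h)) \<and>
     (\<forall>c f g. m (smult_series c f) g = smult_series c (m f g)) \<and>
     (\<forall>f g h. m f (m g h) = m (m f g) h) \<and>
     (\<forall>f g. m f g = m g f)"

text \<open>Polynomials in variables 'v with rational coefficients: finitely supported
  maps from monomials (finitely supported exponent maps) to coefficients.\<close>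
type_synonym 'v mpoly = "('v \<Rightarrow>\<^sub>0 nat) \<Rightarrow>\<^sub>0 rat"

primrec poly_of :: "'v trm \<Rightarrow> 'v mpoly" where
  "poly_of (Var v) = Poly_Mapping.single (Poly_Mapping.single v 1) 1"
| "poly_of Zero = 0"
| "poly_of (Scal c u) = Poly_Mapping.single 0 c * poly_of u"
| "poly_of (Plus u v) = poly_of u + poly_of v"
| "poly_of (Times u v) = poly_of u * poly_of v"

definition term_equiv :: "'v trm \<Rightarrow> 'v trm \<Rightarrow> bool" (infix "\<approx>" 50) where
  "u \<approx> v \<longleftrightarrow> poly_of u = poly_of v"

datatype svar = SX | SDX | SY | SDY | SZ | SDZ

definition special :: "prule \<Rightarrow> bool" where
  "special P \<longleftrightarrow>
     inst P (Plus (Var SX) (Var SY)) (Plus (Var SDX) (Var SDY)) (Var SZ) (Var SDZ)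
       \<approx> Plus (inst P (Var SX) (Var SDX) (Var SZ) (Var SDZ))
              (inst P (Var SY) (Var SDY) (Var SZ) (Var SDZ)) \<and>
     inst P (Var SX) (Var SDX) (Times (Var SY) (Var SZ))
            (inst P (Var SY) (Var SDY) (Var SZ) (Var SDZ))
       \<approx> inst P (Times (Var SX) (Var SY)) (inst P (Var SX) (Var SDX) (Var SY) (Var SDY))
              (Var SZ) (Var SDZ) \<and>
     inst P (Var SX) (Var SDX) (Var SY) (Var SDY)
       \<approx> inst P (Var SY) (Var SDY) (Var SX) (Var SDX)"

end

theory Submission
  imports Defs "HOL-Computational_Algebra.Polynomial"
begin

(* The product of f and g at a word a w is the value at w of P, evaluated with the product itself
   on f, \<delta>a f, g, \<delta>a g.  Hence, if the BAC laws hold on all words of length at most n, the laws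
   at length n + 1 amount to the special identities, evaluated on words of length n.  Truncating the
   product to words of length at most n gives a genuine commutative (non-unital) Q-algebra, in which
   terms with the same polynomial have the same value: both sides are sums of monomials, whose
   values depend only on the multiset of their variables.  Homogeneity follows from additivity.
   Conversely, evaluating each BAC law at a one-letter word turns it into an equality of rational
   polynomial functions of the special terms, and a rational polynomial vanishing everywhere is zero. *)

type_synonym 'a series_op = "'a series \<Rightarrow> 'a series \<Rightarrow> 'a series"

lemmas series_ops_def = zero_series_def add_series_def smult_series_def

lemma lderiv_add_series [simp]: "lderiv a (add_series f g) = add_series (lderiv a f) (lderiv a g)"
  by (simp add: lderiv_def add_series_def)

lemma smult_series_0 [simp]: "smult_series 0 f = zero_series"
  by (simp add: series_ops_def)

lemma smult_zero_series [simp]: "smult_series c zero_series = zero_series"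
  by (simp add: series_ops_def)

lemma smult_add_series: "smult_series c (add_series f g) = add_series (smult_series c f) (smult_series c g)"
  by (simp add: series_ops_def algebra_simps)

lemma smult_smult_series [simp]: "smult_series c (smult_series d f) = smult_series (c * d) f"
  by (simp add: series_ops_def mult.assoc)

lemma smult_series_1 [simp]: "smult_series 1 f = f"
  by (simp add: series_ops_def)

lemma add_zero_series [simp]: "add_series f zero_series = f" "add_series zero_series f = f"
  by (simp_all add: series_ops_def)

definition agree :: "nat \<Rightarrow> 'a series \<Rightarrow> 'a series \<Rightarrow> bool" where
  "agree n f g \<longleftrightarrow> (\<forall>w. length w \<le> n \<longrightarrow> f w = g w)"

lemma agree_refl [simp]: "agree n f f"
  by (simp add: agree_def)

lemma agree_sym: "agree n f g \<Longrightarrow> agree n g f"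
  by (simp add: agree_def)

lemma agree_trans: "agree n f g \<Longrightarrow> agree n g h \<Longrightarrow> agree n f h"
  by (simp add: agree_def)

lemma agree_mono: "agree n f g \<Longrightarrow> k \<le> n \<Longrightarrow> agree k f g"
  by (simp add: agree_def)

lemma agree_lderiv: "agree (Suc n) f g \<Longrightarrow> agree n (lderiv a f) (lderiv a g)"
  by (simp add: agree_def lderiv_def)

lemma agree_all_iff_eq: "(\<forall>n. agree n f g) \<longleftrightarrow> f = g"
  by (auto simp: agree_def fun_eq_iff)

definition congruent_upto :: "nat \<Rightarrow> 'a series_op \<Rightarrow> 'a series_op \<Rightarrow> bool" where
  "congruent_upto n m m' \<longleftrightarrow> (\<forall>f f' g g'. agree n f f' \<longrightarrow> agree n g g' \<longrightarrow> agree n (m f g) (m' f' g'))"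

lemma congruent_uptoD: "congruent_upto n m m' \<Longrightarrow> agree n f f' \<Longrightarrow> agree n g g' \<Longrightarrow> agree n (m f g) (m' f' g')"
  by (simp add: congruent_upto_def)

lemma agree_sem:
  assumes "\<And>v. agree n (\<rho> v) (\<rho>' v)" and "congruent_upto n m m'"
  shows "agree n (sem m \<rho> u) (sem m' \<rho>' u)"
  by (induction u)
    (use assms in \<open>auto simp: agree_def series_ops_def congruent_upto_def\<close>)

section \<open>Existence and uniqueness of the P-product\<close>

definition deriv_val :: "'a \<Rightarrow> 'a series \<Rightarrow> 'a series \<Rightarrow> pvar \<Rightarrow> 'a series" where
  "deriv_val a f g = (\<lambda>v. case v of PX \<Rightarrow> f | PDX \<Rightarrow> lderiv a f | PY \<Rightarrow> g | PDY \<Rightarrow> lderiv a g)"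

definition Pstep :: "prule \<Rightarrow> 'a series_op \<Rightarrow> 'a series_op" where
  "Pstep P m f g = (\<lambda>w. case w of [] \<Rightarrow> f [] * g [] | a # w' \<Rightarrow> sem m (deriv_val a f g) P w')"

lemma is_Pproduct_iff_fixpoint: "is_Pproduct P m \<longleftrightarrow> Pstep P m = m"
proof -
  have "Pstep P m f g = m f g \<longleftrightarrow>
      m f g [] = f [] * g [] \<and> (\<forall>a. lderiv a (m f g) = sem m (deriv_val a f g) P)" for f g
    by (auto simp: Pstep_def lderiv_def fun_eq_iff split: list.split)
  moreover have "Pstep P m = m \<longleftrightarrow> (\<forall>f g. Pstep P m f g = m f g)"
    by (simp add: fun_eq_iff)
  ultimately show ?thesis
    by (auto simp: is_Pproduct_def deriv_val_def)
qed

lemma congruent_upto_0_Pstep: "congruent_upto 0 (Pstep P m) (Pstep P m')"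
  by (simp add: congruent_upto_def agree_def Pstep_def)

lemma congruent_upto_Suc_Pstep:
  assumes "congruent_upto n m m'"
  shows "congruent_upto (Suc n) (Pstep P m) (Pstep P m')"
  unfolding congruent_upto_def
proof (intro allI impI)
  fix f f' g g' :: "'a series"
  assume f: "agree (Suc n) f f'" and g: "agree (Suc n) g g'"
  have "agree n (sem m (deriv_val a f g) P) (sem m' (deriv_val a f' g') P)" for a
  proof (rule agree_sem[OF _ assms])
    show "agree n (deriv_val a f g v) (deriv_val a f' g' v)" for v
      using agree_mono[OF f] agree_mono[OF g] agree_lderiv[OF f] agree_lderiv[OF g]
      by (cases v) (simp_all add: deriv_val_def)
  qed
  with f g show "agree (Suc n) (Pstep P m f g) (Pstep P m' f' g')"
    by (auto simp: agree_def Pstep_def split: list.split)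
qed

lemma congruent_upto_Pproducts:
  assumes "is_Pproduct P m" and "is_Pproduct P m'"
  shows "congruent_upto n m m'"
proof -
  have fixpoints: "m = Pstep P m" "m' = Pstep P m'"
    using assms by (simp_all add: is_Pproduct_iff_fixpoint)
  show ?thesis
  proof (induction n)
    case 0
    show ?case by (subst (1 2) fixpoints) (rule congruent_upto_0_Pstep)
  next
    case (Suc n)
    then show ?case by (subst (1 2) fixpoints) (rule congruent_upto_Suc_Pstep)
  qed
qed

lemma is_Pproduct_unique:
  assumes "is_Pproduct P m" and "is_Pproduct P m'"
  shows "m = m'"
proof (intro ext)
  fix f g :: "'a series" and w :: "'a list"
  from congruent_uptoD[OF congruent_upto_Pproducts[OF assms, of "length w"] agree_refl agree_refl]
  show "m f g w = m' f g w"
    by (simp add: agree_def)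
qed

text \<open>\<open>Papprox P i\<close> agrees with the P-product on words of length less than \<open>i\<close>.\<close>
primrec Papprox :: "prule \<Rightarrow> nat \<Rightarrow> 'a series_op" where
  "Papprox P 0 = (\<lambda>f g. zero_series)"
| "Papprox P (Suc i) = Pstep P (Papprox P i)"

lemma congruent_upto_Papprox: "n < i \<Longrightarrow> n < j \<Longrightarrow> congruent_upto n (Papprox P i) (Papprox P j)"
proof (induction n arbitrary: i j)
  case 0
  then show ?case
    by (cases i; cases j) (simp_all add: congruent_upto_0_Pstep)
next
  case (Suc n)
  then show ?case
    by (cases i; cases j) (simp_all add: congruent_upto_Suc_Pstep)
qed

definition Papprox_limit :: "prule \<Rightarrow> 'a series_op" where
  "Papprox_limit P f g w = Papprox P (Suc (length w)) f g w"

lemma congruent_upto_Papprox_limit: "congruent_upto n (Papprox_limit P) (Papprox P (Suc n))"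
  unfolding congruent_upto_def
proof (intro allI impI)
  fix f f' g g' :: "'a series"
  assume f: "agree n f f'" and g: "agree n g g'"
  show "agree n (Papprox_limit P f g) (Papprox P (Suc n) f' g')"
    unfolding agree_def
  proof (intro allI impI)
    fix w :: "'a list"
    assume w: "length w \<le> n"
    then have "congruent_upto (length w) (Papprox P (Suc (length w))) (Papprox P (Suc n))"
      by (intro congruent_upto_Papprox) auto
    from congruent_uptoD[OF this agree_mono[OF f w] agree_mono[OF g w]]
    show "Papprox_limit P f g w = Papprox P (Suc n) f' g' w"
      by (simp add: agree_def Papprox_limit_def del: Papprox.simps)
  qed
qed

lemma Pstep_Papprox_limit: "Pstep P (Papprox_limit P) = Papprox_limit P"
proof (intro ext)
  fix f g :: "'a series" and w :: "'a list"
  show "Pstep P (Papprox_limit P) f g w = Papprox_limit P f g w"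
  proof (cases w)
    case (Cons a w')
    let ?\<sigma> = "deriv_val a f g"
    have "agree (length w') (sem (Papprox_limit P) ?\<sigma> P) (sem (Papprox P (Suc (length w'))) ?\<sigma> P)"
      by (rule agree_sem) (simp_all only: congruent_upto_Papprox_limit agree_refl)
    then have "sem (Papprox_limit P) ?\<sigma> P w' = sem (Papprox P (Suc (length w'))) ?\<sigma> P w'"
      by (simp only: agree_def order_refl)
    then show ?thesis
      by (simp only: Cons Pstep_def list.case Papprox.simps(2) length_Cons Papprox_limit_def)
  qed (simp add: Pstep_def Papprox_limit_def)
qed

lemma is_Pproduct_Pproduct: "is_Pproduct P (Pproduct P)"
proof -
  have "\<exists>!m. is_Pproduct P m"
    using Pstep_Papprox_limit is_Pproduct_iff_fixpoint is_Pproduct_unique by blast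
  then show ?thesis
    unfolding Pproduct_def by (rule theI')
qed

lemma Pstep_Pproduct: "Pstep P (Pproduct P) = Pproduct P"
  using is_Pproduct_iff_fixpoint is_Pproduct_Pproduct by blast

lemma Pproduct_Nil [simp]: "Pproduct P f g [] = f [] * g []"
  by (subst Pstep_Pproduct[symmetric]) (simp add: Pstep_def)

lemma Pproduct_Cons: "Pproduct P f g (a # w) = sem (Pproduct P) (deriv_val a f g) P w"
  by (subst Pstep_Pproduct[symmetric]) (simp add: Pstep_def)

lemma lderiv_Pproduct: "lderiv a (Pproduct P f g) = sem (Pproduct P) (deriv_val a f g) P"
  by (simp add: lderiv_def Pproduct_Cons)

lemma congruent_upto_Pproduct: "congruent_upto n (Pproduct P) (Pproduct P)"
  using congruent_upto_Pproducts[OF is_Pproduct_Pproduct is_Pproduct_Pproduct] .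

section \<open>Polynomials as formal sums of monomials\<close>

type_synonym 'v monoms = "('v multiset \<times> rat) list"

definition mon :: "'v multiset \<Rightarrow> ('v \<Rightarrow>\<^sub>0 nat)" where
  "mon M = (\<Sum>x\<in>#M. Poly_Mapping.single x 1)"

lemma mon_empty [simp]: "mon {#} = 0"
  by (simp add: mon_def)

lemma mon_union [simp]: "mon (M + N) = mon M + mon N"
  by (simp add: mon_def)

lemma mon_singleton [simp]: "mon {#x#} = Poly_Mapping.single x 1"
  by (simp add: mon_def)

lemma lookup_mon: "Poly_Mapping.lookup (mon M) x = count M x"
  by (induction M) (simp_all add: mon_def lookup_add lookup_single when_def)

lemma inj_mon: "inj mon"
  by (rule injI) (metis lookup_mon multiset_eqI)

lemma mon_replicate_mset: "mon (replicate_mset n x) = Poly_Mapping.single x n"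
  by (induction n) (simp_all add: mon_def single_add[symmetric])

definition poly_of_monoms :: "'v monoms \<Rightarrow> 'v mpoly" where
  "poly_of_monoms L = (\<Sum>(M, c)\<leftarrow>L. Poly_Mapping.single (mon M) c)"

lemma poly_of_monoms_simps [simp]:
  "poly_of_monoms [] = 0"
  "poly_of_monoms ((M, c) # L) = Poly_Mapping.single (mon M) c + poly_of_monoms L"
  "poly_of_monoms (L @ L') = poly_of_monoms L + poly_of_monoms L'"
  by (simp_all add: poly_of_monoms_def)

definition monoms_times :: "'v monoms \<Rightarrow> 'v monoms \<Rightarrow> 'v monoms" where
  "monoms_times L L' = concat (map (\<lambda>(M, c). map (\<lambda>(N, d). (M + N, c * d)) L') L)"

lemma monoms_times_simps:
  "monoms_times [] L' = []"
  "monoms_times ((M, c) # L) L' = map (\<lambda>(N, d). (M + N, c * d)) L' @ monoms_times L L'"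
  by (simp_all add: monoms_times_def)

lemma poly_of_monoms_times: "poly_of_monoms (monoms_times L L') = poly_of_monoms L * poly_of_monoms L'"
proof (induction L)
  case (Cons e L)
  have "poly_of_monoms (map (\<lambda>(N, d). (M + N, c * d)) L') =
      Poly_Mapping.single (mon M) c * poly_of_monoms L'"
    for M c
    by (induction L') (auto simp: distrib_left mult_single)
  with Cons show ?case
    by (cases e) (simp add: monoms_times_simps distrib_right)
qed (simp add: monoms_times_simps)

primrec nf :: "'v trm \<Rightarrow> 'v monoms" where
  "nf (Var v) = [({#v#}, 1)]"
| "nf Zero = []"
| "nf (Scal c u) = monoms_times [({#}, c)] (nf u)"
| "nf (Plus u v) = nf u @ nf v"
| "nf (Times u v) = monoms_times (nf u) (nf v)"

lemma poly_of_nf: "poly_of_monoms (nf u) = poly_of u"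
  by (induction u) (simp_all add: poly_of_monoms_times)

lemma nf_nonempty: "(M, c) \<in> set (nf u) \<Longrightarrow> M \<noteq> {#}"
  by (induction u arbitrary: M c) (fastforce simp: monoms_times_def)+

primrec eval_trm :: "('v \<Rightarrow> rat) \<Rightarrow> 'v trm \<Rightarrow> rat" where
  "eval_trm \<rho> (Var v) = \<rho> v"
| "eval_trm \<rho> Zero = 0"
| "eval_trm \<rho> (Scal c u) = c * eval_trm \<rho> u"
| "eval_trm \<rho> (Plus u v) = eval_trm \<rho> u + eval_trm \<rho> v"
| "eval_trm \<rho> (Times u v) = eval_trm \<rho> u * eval_trm \<rho> v"

definition eval_monoms :: "('v \<Rightarrow> rat) \<Rightarrow> 'v monoms \<Rightarrow> rat" where
  "eval_monoms \<rho> L = (\<Sum>(M, c)\<leftarrow>L. c * (\<Prod>x\<in>#M. \<rho> x))"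

lemma eval_monoms_simps [simp]:
  "eval_monoms \<rho> [] = 0"
  "eval_monoms \<rho> ((M, c) # L) = c * (\<Prod>x\<in>#M. \<rho> x) + eval_monoms \<rho> L"
  "eval_monoms \<rho> (L @ L') = eval_monoms \<rho> L + eval_monoms \<rho> L'"
  by (simp_all add: eval_monoms_def)

lemma eval_monoms_times: "eval_monoms \<rho> (monoms_times L L') = eval_monoms \<rho> L * eval_monoms \<rho> L'"
proof (induction L)
  case (Cons e L)
  have "eval_monoms \<rho> (map (\<lambda>(N, d). (M + N, c * d)) L') = c * (\<Prod>x\<in>#M. \<rho> x) * eval_monoms \<rho> L'"
    for M c
    by (induction L') (auto simp: algebra_simps)
  with Cons show ?case
    by (cases e) (simp add: monoms_times_simps algebra_simps)
qed (simp add: monoms_times_simps)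

lemma eval_nf: "eval_trm \<rho> u = eval_monoms \<rho> (nf u)"
  by (induction u) (simp_all add: eval_monoms_times)

lemma sum_list_group_by:
  fixes f :: "'e \<Rightarrow> 'b::comm_monoid_add"
  assumes "\<And>e. e \<in> set xs \<Longrightarrow> key e \<le> (K::nat)"
  shows "(\<Sum>e\<leftarrow>xs. f e) = (\<Sum>k\<le>K. \<Sum>e\<leftarrow>filter (\<lambda>e. key e = k) xs. f e)"
  using assms
proof (induction xs)
  case (Cons e xs)
  have "(\<Sum>k\<le>K. \<Sum>e'\<leftarrow>filter (\<lambda>e'. key e' = k) (e # xs). f e') =
      (\<Sum>k\<le>K. (if key e = k then f e else 0) + (\<Sum>e'\<leftarrow>filter (\<lambda>e'. key e' = k) xs. f e'))"
    by (rule sum.cong) auto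
  also have "\<dots> = (\<Sum>k\<le>K. if key e = k then f e else 0) + (\<Sum>k\<le>K. \<Sum>e'\<leftarrow>filter (\<lambda>e'. key e' = k) xs. f e')"
    by (rule sum.distrib)
  also have "(\<Sum>k\<le>K. if key e = k then f e else 0) = f e"
    using Cons.prems by simp
  finally show ?case
    using Cons by simp
qed simp

definition coeff_monoms :: "'v \<Rightarrow> nat \<Rightarrow> 'v monoms \<Rightarrow> 'v monoms" where
  "coeff_monoms x k L = map (\<lambda>(M, c). ({#y \<in># M. y \<noteq> x#}, c)) (filter (\<lambda>e. count (fst e) x = k) L)"

lemma sum_list_coeff_monoms:
  fixes f :: "'v multiset \<Rightarrow> rat \<Rightarrow> 'b::semiring_0"
  assumes "\<And>M c. count M x = k \<Longrightarrow> f M c = a * f {#y \<in># M. y \<noteq> x#} c"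
  shows "(\<Sum>(M, c)\<leftarrow>filter (\<lambda>e. count (fst e) x = k) L. f M c) = a * (\<Sum>(M, c)\<leftarrow>coeff_monoms x k L. f M c)"
  using assms by (induction L) (auto simp: coeff_monoms_def distrib_left)

lemma multiset_split_count: "M = replicate_mset (count M x) x + {#y \<in># M. y \<noteq> x#}"
  by (subst multiset_partition[of _ "\<lambda>y. y = x"]) (simp add: filter_eq_replicate_mset)

lemma prod_mset_split_count: "(\<Prod>y\<in>#M. \<rho> y) = \<rho> x ^ count M x * (\<Prod>y\<in>#{#y \<in># M. y \<noteq> x#}. \<rho> y)"
  using arg_cong[OF multiset_split_count[of M x], of "\<lambda>N. \<Prod>y\<in>#N. \<rho> y"] by simp

lemma mon_split_count: "mon M = Poly_Mapping.single x (count M x) + mon {#y \<in># M. y \<noteq> x#}"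
  using arg_cong[OF multiset_split_count[of M x], of mon] by (simp add: mon_replicate_mset)

lemma eval_monoms_split_var:
  assumes "\<And>M c. (M, c) \<in> set L \<Longrightarrow> count M x \<le> K"
  shows "eval_monoms \<rho> L = (\<Sum>k\<le>K. \<rho> x ^ k * eval_monoms \<rho> (coeff_monoms x k L))"
proof -
  have filter_k: "eval_monoms \<rho> (filter (\<lambda>e. count (fst e) x = k) L) =
      \<rho> x ^ k * eval_monoms \<rho> (coeff_monoms x k L)" for k
    unfolding eval_monoms_def
  proof (rule sum_list_coeff_monoms)
    fix M :: "'a multiset" and c :: rat
    assume "count M x = k"
    then show "c * (\<Prod>y\<in>#M. \<rho> y) = \<rho> x ^ k * (c * (\<Prod>y\<in>#{#y \<in># M. y \<noteq> x#}. \<rho> y))"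
      by (simp add: prod_mset_split_count[where M = M and x = x])
  qed
  have "eval_monoms \<rho> L = (\<Sum>k\<le>K. eval_monoms \<rho> (filter (\<lambda>e. count (fst e) x = k) L))"
    unfolding eval_monoms_def by (rule sum_list_group_by) (use assms in auto)
  then show ?thesis
    by (simp only: filter_k)
qed

lemma poly_of_monoms_split_var:
  assumes "\<And>M c. (M, c) \<in> set L \<Longrightarrow> count M x \<le> K"
  shows "poly_of_monoms L =
    (\<Sum>k\<le>K. Poly_Mapping.single (Poly_Mapping.single x k) 1 * poly_of_monoms (coeff_monoms x k L))"
proof -
  have filter_k: "poly_of_monoms (filter (\<lambda>e. count (fst e) x = k) L) =
      Poly_Mapping.single (Poly_Mapping.single x k) 1 * poly_of_monoms (coeff_monoms x k L)" for k
    unfolding poly_of_monoms_def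
  proof (rule sum_list_coeff_monoms)
    fix M :: "'a multiset" and c :: rat
    assume "count M x = k"
    then show "Poly_Mapping.single (mon M) c =
        Poly_Mapping.single (Poly_Mapping.single x k) 1 * Poly_Mapping.single (mon {#y \<in># M. y \<noteq> x#}) c"
      by (simp add: mon_split_count[where M = M and x = x] mult_single)
  qed
  have "poly_of_monoms L = (\<Sum>k\<le>K. poly_of_monoms (filter (\<lambda>e. count (fst e) x = k) L))"
    unfolding poly_of_monoms_def by (rule sum_list_group_by) (use assms in auto)
  then show ?thesis
    by (simp only: filter_k)
qed

lemma poly_of_monoms_constant:
  assumes "\<forall>(M, c)\<in>set L. M = {#}"
  shows "poly_of_monoms L = Poly_Mapping.single 0 (eval_monoms \<rho> L)"
  using assms
proof (induction L)
  case (Cons e L)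
  then show ?case
    by (cases e) (simp add: single_add)
qed simp

lemma eval_monoms_cong:
  assumes "\<forall>(M, c)\<in>set L. \<forall>y\<in>#M. \<rho> y = \<rho>' y"
  shows "eval_monoms \<rho> L = eval_monoms \<rho>' L"
  using assms
proof (induction L)
  case (Cons e L)
  obtain M c where e: "e = (M, c)"
    by fastforce
  have "image_mset \<rho> M = image_mset \<rho>' M"
    using Cons.prems e by (intro image_mset_cong) simp
  with Cons e show ?case
    by simp
qed simp

lemma count_le_sum_size: "(M, c) \<in> set L \<Longrightarrow> count M x \<le> (\<Sum>(M, c)\<leftarrow>L. size M)"
proof -
  assume "(M, c) \<in> set L"
  then have "size M \<in> set (map (\<lambda>(M, c). size M) L)"
    by force
  then have "size M \<le> (\<Sum>(M, c)\<leftarrow>L. size M)"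
    by (rule member_le_sum_list) simp
  then show ?thesis
    using count_le_size[of M x] by linarith
qed

lemma eval_coeff_monoms_eq_0:
  assumes "\<And>\<rho>. eval_monoms \<rho> L = 0"
  shows "eval_monoms \<rho> (coeff_monoms x k L) = 0"
proof -
  define K where "K = (\<Sum>(M, c)\<leftarrow>L. size M)"
  have K: "count M x \<le> K" if "(M, c) \<in> set L" for M c
    unfolding K_def using that by (rule count_le_sum_size)
  define q where "q = (\<Sum>i\<le>K. monom (eval_monoms \<rho> (coeff_monoms x i L)) i)"
  have upd: "eval_monoms (\<rho>(x := t)) (coeff_monoms x i L) = eval_monoms \<rho> (coeff_monoms x i L)" for i t
    by (rule eval_monoms_cong) (auto simp: coeff_monoms_def)
  have "poly q t = eval_monoms (\<rho>(x := t)) L" for t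
    by (simp add: eval_monoms_split_var[OF K, where \<rho> = "\<rho>(x := t)"] q_def poly_sum poly_monom
        mult.commute upd)
  then have "q = 0"
    using assms poly_all_0_iff_0 by auto
  then have "coeff q k = 0"
    by simp
  moreover have "k > K \<Longrightarrow> coeff_monoms x k L = []"
    using K by (fastforce simp: coeff_monoms_def filter_empty_conv)
  ultimately show ?thesis
    by (cases "k \<le> K") (simp_all add: q_def coeff_sum)
qed

lemma poly_of_monoms_eq_0_finite_vars:
  assumes "finite V" and "\<And>M c. (M, c) \<in> set L \<Longrightarrow> set_mset M \<subseteq> V" and "\<And>\<rho>. eval_monoms \<rho> L = 0"
  shows "poly_of_monoms L = 0"
  using assms
proof (induction V arbitrary: L rule: finite_induct)
  case empty
  then show ?case
    using poly_of_monoms_constant[of L "\<lambda>_. 0"] by fastforce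
next
  case (insert x V)
  have "poly_of_monoms (coeff_monoms x k L) = 0" for k
  proof (rule insert.IH)
    show "set_mset M \<subseteq> V" if "(M, c) \<in> set (coeff_monoms x k L)" for M c
      using that insert.prems(1) by (fastforce simp: coeff_monoms_def)
  qed (rule eval_coeff_monoms_eq_0[OF insert.prems(2)])
  then show ?case
    using poly_of_monoms_split_var[of L x "\<Sum>(M, c)\<leftarrow>L. size M", OF count_le_sum_size] by simp
qed

lemma poly_of_monoms_eq_0:
  assumes "\<And>\<rho>. eval_monoms \<rho> L = 0"
  shows "poly_of_monoms L = 0"
  by (rule poly_of_monoms_eq_0_finite_vars[of "\<Union>(M, c)\<in>set L. set_mset M"]) (auto intro: assms)

lemma poly_of_eq_if_eval_eq:
  assumes "\<And>\<rho>. eval_trm \<rho> u = eval_trm \<rho> v"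
  shows "poly_of u = poly_of v"
proof -
  define L where "L = nf u @ monoms_times [({#}, -1)] (nf v)"
  have "poly_of_monoms L = 0"
  proof (rule poly_of_monoms_eq_0)
    show "eval_monoms \<rho> L = 0" for \<rho>
      using assms[of \<rho>] by (simp add: L_def eval_monoms_times eval_nf[symmetric])
  qed
  then show ?thesis
    by (simp add: L_def poly_of_monoms_times poly_of_nf single_uminus)
qed

section \<open>Term equivalence is sound for BAC products\<close>

definition opt_mult :: "('b \<Rightarrow> 'b \<Rightarrow> 'b) \<Rightarrow> 'b option \<Rightarrow> 'b option \<Rightarrow> 'b option" where
  "opt_mult m x y = (case x of None \<Rightarrow> y | Some a \<Rightarrow> (case y of None \<Rightarrow> Some a | Some b \<Rightarrow> Some (m a b)))"

lemma opt_mult_simps [simp]: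
  "opt_mult m None y = y" "opt_mult m x None = x" "opt_mult m (Some a) (Some b) = Some (m a b)"
  by (simp_all add: opt_mult_def split: option.split)

lemma opt_mult_eq_None_iff [simp]: "opt_mult m x y = None \<longleftrightarrow> x = None \<and> y = None"
  by (simp add: opt_mult_def split: option.split)

lemma comm_monoid_opt_mult:
  assumes "abel_semigroup m"
  shows "comm_monoid (opt_mult m) None"
proof -
  interpret abel_semigroup m by fact
  show ?thesis
    by unfold_locales (auto simp: opt_mult_def assoc commute left_commute split: option.split)
qed

definition lin_ext :: "('k \<Rightarrow> 'b) \<Rightarrow> ('k \<Rightarrow>\<^sub>0 'b::semiring_0) \<Rightarrow> 'b" where
  "lin_ext \<phi> p = (\<Sum>k\<in>Poly_Mapping.keys p. Poly_Mapping.lookup p k * \<phi> k)"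

lemma lin_ext_superset:
  assumes "finite S" and "Poly_Mapping.keys p \<subseteq> S"
  shows "lin_ext \<phi> p = (\<Sum>k\<in>S. Poly_Mapping.lookup p k * \<phi> k)"
  unfolding lin_ext_def using assms by (intro sum.mono_neutral_left) (auto simp: in_keys_iff)

lemma lin_ext_add: "lin_ext \<phi> (p + q) = lin_ext \<phi> p + lin_ext \<phi> q"
proof -
  let ?S = "Poly_Mapping.keys p \<union> Poly_Mapping.keys q"
  have "lin_ext \<phi> (p + q) = (\<Sum>k\<in>?S. Poly_Mapping.lookup (p + q) k * \<phi> k)"
    by (rule lin_ext_superset) (simp_all add: keys_add)
  also have "\<dots> = (\<Sum>k\<in>?S. Poly_Mapping.lookup p k * \<phi> k) + (\<Sum>k\<in>?S. Poly_Mapping.lookup q k * \<phi> k)"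
    by (simp add: lookup_add distrib_right sum.distrib)
  also have "\<dots> = lin_ext \<phi> p + lin_ext \<phi> q"
    using lin_ext_superset[of ?S p \<phi>] lin_ext_superset[of ?S q \<phi>] by simp
  finally show ?thesis .
qed

lemma lin_ext_single: "lin_ext \<phi> (Poly_Mapping.single k c) = c * \<phi> k"
  by (simp add: lin_ext_def)

locale BAC_product =
  fixes m :: "'a series_op"
  assumes BAC: "BAC m"
begin

lemma add_left: "m (add_series f g) h = add_series (m f h) (m g h)"
  and smult_left: "m (smult_series c f) g = smult_series c (m f g)"
  and assoc: "m f (m g h) = m (m f g) h"
  and commute: "m f g = m g f"
  using BAC unfolding BAC_def by blast+

lemma add_right: "m h (add_series f g) = add_series (m h f) (m h g)"
  using add_left[of f g h] by (simp only: commute[of h])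

lemma smult_right: "m g (smult_series c f) = smult_series c (m g f)"
  using smult_left[of c f g] by (simp only: commute[of g])

lemma zero_left: "m zero_series g = zero_series"
  using smult_left[of 0 zero_series g] by simp

lemma zero_right: "m g zero_series = zero_series"
  using zero_left[of g] by (simp only: commute[of g])

lemma abel_semigroup: "abel_semigroup m"
  by unfold_locales (rule assoc[symmetric], rule commute)

text \<open>Monomials are evaluated in the algebra with a unit \<open>None\<close> adjoined, which makes their
  evaluation a monoid homomorphism on multisets. The empty monomial has no value in the
  non-unital algebra; \<open>mono_val \<rho> {#}\<close> is junk and never used.\<close>
sublocale monomials: comm_monoid_mset "opt_mult m" None
  unfolding comm_monoid_mset_def by (rule comm_monoid_opt_mult[OF abel_semigroup])

definition mono_val :: "('v \<Rightarrow> 'a series) \<Rightarrow> 'v multiset \<Rightarrow> 'a series" where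
  "mono_val \<rho> M = the (monomials.F (image_mset (Some \<circ> \<rho>) M))"

lemma monomials_F_eq_None_iff: "monomials.F (image_mset (Some \<circ> \<rho>) M) = None \<longleftrightarrow> M = {#}"
  by (induction M) simp_all

lemma mono_val_singleton [simp]: "mono_val \<rho> {#v#} = \<rho> v"
  by (simp add: mono_val_def)

lemma mono_val_union:
  assumes "M \<noteq> {#}" and "N \<noteq> {#}"
  shows "mono_val \<rho> (M + N) = m (mono_val \<rho> M) (mono_val \<rho> N)"
proof -
  obtain a where "monomials.F (image_mset (Some \<circ> \<rho>) M) = Some a"
    using assms(1) by (cases "monomials.F (image_mset (Some \<circ> \<rho>) M)") (simp_all add: monomials_F_eq_None_iff)
  moreover obtain b where "monomials.F (image_mset (Some \<circ> \<rho>) N) = Some b"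
    using assms(2) by (cases "monomials.F (image_mset (Some \<circ> \<rho>) N)") (simp_all add: monomials_F_eq_None_iff)
  ultimately show ?thesis
    by (simp add: mono_val_def)
qed

definition eval_series :: "('v \<Rightarrow> 'a series) \<Rightarrow> 'v monoms \<Rightarrow> 'a series" where
  "eval_series \<rho> L = (\<lambda>w. \<Sum>(M, c)\<leftarrow>L. c * mono_val \<rho> M w)"

lemma eval_series_simps [simp]:
  "eval_series \<rho> [] = zero_series"
  "eval_series \<rho> ((M, c) # L) = add_series (smult_series c (mono_val \<rho> M)) (eval_series \<rho> L)"
  "eval_series \<rho> (L @ L') = add_series (eval_series \<rho> L) (eval_series \<rho> L')"
  by (simp_all add: eval_series_def series_ops_def)

lemma eval_series_scale: "eval_series \<rho> (monoms_times [({#}, c)] L) = smult_series c (eval_series \<rho> L)"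
  by (induction L) (auto simp: monoms_times_simps smult_add_series)

lemma eval_series_times:
  assumes "\<forall>(M, c)\<in>set L. M \<noteq> {#}" and "\<forall>(N, d)\<in>set L'. N \<noteq> {#}"
  shows "eval_series \<rho> (monoms_times L L') = m (eval_series \<rho> L) (eval_series \<rho> L')"
  using assms(1)
proof (induction L)
  case Nil
  then show ?case
    by (simp add: monoms_times_simps zero_left)
next
  case (Cons e L)
  obtain M c where e: "e = (M, c)" and "M \<noteq> {#}"
    using Cons.prems by fastforce
  have "eval_series \<rho> (map (\<lambda>(N, d). (M + N, c * d)) L') =
      smult_series c (m (mono_val \<rho> M) (eval_series \<rho> L'))"
    using assms(2)
  proof (induction L')
    case (Cons e' L')
    then obtain N d where "e' = (N, d)" and "N \<noteq> {#}"
      by fastforce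
    with Cons \<open>M \<noteq> {#}\<close> show ?case
      by (simp add: mono_val_union add_right smult_right smult_add_series mult.commute)
  qed (simp add: zero_right)
  with Cons e show ?case
    by (simp add: monoms_times_simps add_left smult_left)
qed

lemma sem_eq_eval_series: "sem m \<rho> u = eval_series \<rho> (nf u)"
proof (induction u)
  case (Times u v)
  have "\<forall>(M, c)\<in>set (nf u). M \<noteq> {#}" "\<forall>(N, d)\<in>set (nf v). N \<noteq> {#}"
    using nf_nonempty by blast+
  with Times show ?case
    by (simp add: eval_series_times)
qed (simp_all add: eval_series_scale)

lemma eval_series_eq_lin_ext:
  "eval_series \<rho> L w = lin_ext (\<lambda>\<alpha>. mono_val \<rho> (inv mon \<alpha>) w) (poly_of_monoms L)"
proof (induction L)
  case (Cons e L)
  then show ?case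
    by (cases e) (simp add: lin_ext_add lin_ext_single inv_f_f[OF inj_mon] series_ops_def)
qed (simp add: lin_ext_def zero_series_def)

lemma sem_eq_if_poly_eq:
  assumes "poly_of u = poly_of v"
  shows "sem m \<rho> u = sem m \<rho> v"
proof
  fix w
  show "sem m \<rho> u w = sem m \<rho> v w"
    using assms by (simp add: sem_eq_eval_series eval_series_eq_lin_ext poly_of_nf)
qed

end

section \<open>Special product rules give BAC products\<close>

definition trunc :: "nat \<Rightarrow> 'a series \<Rightarrow> 'a series" where
  "trunc n f = (\<lambda>w. if length w \<le> n then f w else 0)"

lemma agree_trunc: "agree n (trunc n f) f"
  by (simp add: agree_def trunc_def)

lemma trunc_eq_iff_agree: "trunc n f = trunc n g \<longleftrightarrow> agree n f g"
  by (auto simp: agree_def trunc_def fun_eq_iff)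

lemma trunc_add_series: "trunc n (add_series f g) = add_series (trunc n f) (trunc n g)"
  by (simp add: trunc_def add_series_def fun_eq_iff)

lemma trunc_smult_series: "trunc n (smult_series c f) = smult_series c (trunc n f)"
  by (simp add: trunc_def smult_series_def fun_eq_iff)

definition BAC_upto :: "nat \<Rightarrow> 'a series_op \<Rightarrow> bool" where
  "BAC_upto n m \<longleftrightarrow>
     (\<forall>f g h. agree n (m (add_series f g) h) (add_series (m f h) (m g h))) \<and>
     (\<forall>c f g. agree n (m (smult_series c f) g) (smult_series c (m f g))) \<and>
     (\<forall>f g h. agree n (m f (m g h)) (m (m f g) h)) \<and>
     (\<forall>f g. agree n (m f g) (m g f))"

lemma BAC_if_BAC_upto:
  assumes "\<And>n. BAC_upto n m"
  shows "BAC m"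
  using assms by (simp add: BAC_def BAC_upto_def agree_all_iff_eq[symmetric])

lemma BAC_trunc:
  assumes cong: "congruent_upto n m m" and "BAC_upto n m"
  shows "BAC (\<lambda>f g. trunc n (m f g))"
proof -
  have trunc_inner: "trunc n (m f (trunc n g)) = trunc n (m f g)"
      "trunc n (m (trunc n f) g) = trunc n (m f g)" for f g
    using congruent_uptoD[OF cong agree_refl agree_trunc] congruent_uptoD[OF cong agree_trunc agree_refl]
    by (simp_all add: trunc_eq_iff_agree)
  show ?thesis
    using \<open>BAC_upto n m\<close>
    by (simp add: BAC_def BAC_upto_def trunc_inner trunc_add_series[symmetric] trunc_smult_series[symmetric]
        trunc_eq_iff_agree)
qed

lemma sem_agree_if_poly_eq:
  assumes cong: "congruent_upto n m m" and "BAC_upto n m" and "poly_of u = poly_of v"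
  shows "agree n (sem m \<rho> u) (sem m \<rho> v)"
proof -
  let ?mt = "\<lambda>f g. trunc n (m f g)"
  interpret BAC_product ?mt
    using BAC_trunc[OF assms(1,2)] by unfold_locales
  have "congruent_upto n m ?mt"
    unfolding congruent_upto_def
  proof (intro allI impI)
    fix f f' g g' :: "'a series"
    assume "agree n f f'" and "agree n g g'"
    from congruent_uptoD[OF cong this] show "agree n (m f g) (?mt f' g')"
      using agree_trans agree_sym[OF agree_trunc] by blast
  qed
  then have "agree n (sem m \<rho> t) (sem ?mt \<rho> t)" for t
    by (intro agree_sem) simp_all
  from this[of u] this[of v] show ?thesis
    unfolding sem_eq_if_poly_eq[OF assms(3)] using agree_trans agree_sym by blast
qed

lemma sem_subst: "sem m \<rho> (subst s u) = sem m (\<lambda>v. sem m \<rho> (s v)) u"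
  by (induction u) simp_all

lemma eval_trm_subst: "eval_trm \<rho> (subst s u) = eval_trm (\<lambda>v. eval_trm \<rho> (s v)) u"
  by (induction u) simp_all

lemma sem_inst: "sem m \<sigma> (inst P s1 s2 s3 s4) =
    sem m (\<lambda>v. case v of PX \<Rightarrow> sem m \<sigma> s1 | PDX \<Rightarrow> sem m \<sigma> s2 | PY \<Rightarrow> sem m \<sigma> s3 | PDY \<Rightarrow> sem m \<sigma> s4) P"
  unfolding inst_def sem_subst
  by (rule arg_cong[where f = "\<lambda>\<rho>. sem m \<rho> P"]) (simp add: fun_eq_iff split: pvar.split)

lemma eval_trm_inst: "eval_trm \<rho> (inst P s1 s2 s3 s4) =
    eval_trm (\<lambda>v. case v of PX \<Rightarrow> eval_trm \<rho> s1 | PDX \<Rightarrow> eval_trm \<rho> s2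
      | PY \<Rightarrow> eval_trm \<rho> s3 | PDY \<Rightarrow> eval_trm \<rho> s4) P"
  unfolding inst_def eval_trm_subst
  by (rule arg_cong[where f = "\<lambda>\<rho>. eval_trm \<rho> P"]) (simp add: fun_eq_iff split: pvar.split)

lemma sem_Nil:
  assumes "\<And>f g. m f g [] = f [] * g []"
  shows "sem m \<rho> u [] = eval_trm (\<lambda>v. \<rho> v []) u"
  by (induction u) (simp_all add: assms series_ops_def)

definition sderiv_val :: "'a \<Rightarrow> 'a series \<Rightarrow> 'a series \<Rightarrow> 'a series \<Rightarrow> svar \<Rightarrow> 'a series" where
  "sderiv_val a f g h = (\<lambda>v. case v of SX \<Rightarrow> f | SDX \<Rightarrow> lderiv a f | SY \<Rightarrow> g | SDY \<Rightarrow> lderiv a g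
     | SZ \<Rightarrow> h | SDZ \<Rightarrow> lderiv a h)"

lemma sderiv_val_simps [simp]:
  "sderiv_val a f g h SX = f" "sderiv_val a f g h SDX = lderiv a f"
  "sderiv_val a f g h SY = g" "sderiv_val a f g h SDY = lderiv a g"
  "sderiv_val a f g h SZ = h" "sderiv_val a f g h SDZ = lderiv a h"
  by (simp_all add: sderiv_val_def)

lemma sem_inst_Pproduct:
  fixes P :: prule and a :: 'a and f g h :: "'a series"
  defines "\<sigma> \<equiv> sderiv_val a f g h"
  assumes "sem (Pproduct P) \<sigma> s2 = lderiv a (sem (Pproduct P) \<sigma> s1)"
    and "sem (Pproduct P) \<sigma> s4 = lderiv a (sem (Pproduct P) \<sigma> s3)"
  shows "sem (Pproduct P) \<sigma> (inst P s1 s2 s3 s4) =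
    lderiv a (Pproduct P (sem (Pproduct P) \<sigma> s1) (sem (Pproduct P) \<sigma> s3))"
  by (simp only: lderiv_Pproduct sem_inst deriv_val_def assms(2,3))

lemma eval_inst_Pproduct:
  assumes "eval_trm \<rho> s1 = f []" "eval_trm \<rho> s2 = f [a]" "eval_trm \<rho> s3 = g []" "eval_trm \<rho> s4 = g [a]"
  shows "eval_trm \<rho> (inst P s1 s2 s3 s4) = Pproduct P f g [a]"
proof -
  have "(\<lambda>v. deriv_val a f g v []) = (\<lambda>v. case v of PX \<Rightarrow> f [] | PDX \<Rightarrow> f [a] | PY \<Rightarrow> g [] | PDY \<Rightarrow> g [a])"
    by (simp add: fun_eq_iff deriv_val_def lderiv_def split: pvar.split)
  then show ?thesis
    by (simp only: Pproduct_Cons sem_Nil[of "Pproduct P", OF Pproduct_Nil] eval_trm_inst assms)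
qed

lemma agree_Suc_if_lderiv_poly_eq:
  assumes "congruent_upto n m m" and "BAC_upto n m" and "poly_of u = poly_of v"
    and "X [] = Y []" and "\<And>a. lderiv a X = sem m (\<sigma> a) u" and "\<And>a. lderiv a Y = sem m (\<sigma> a) v"
  shows "agree (Suc n) X Y"
  unfolding agree_def
proof (intro allI impI)
  fix w :: "'a list"
  assume "length w \<le> Suc n"
  show "X w = Y w"
  proof (cases w)
    case (Cons a w')
    have "agree n (sem m (\<sigma> a) u) (sem m (\<sigma> a) v)"
      using assms(1-3) by (rule sem_agree_if_poly_eq)
    then have "lderiv a X w' = lderiv a Y w'"
      using \<open>length w \<le> Suc n\<close> Cons by (simp add: assms(5,6) agree_def)
    then show ?thesis
      by (simp add: Cons lderiv_def)
  qed (simp add: assms(4))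
qed

lemma additive_homogeneous:
  fixes F :: "'a series \<Rightarrow> rat"
  assumes add: "\<And>f g. F (add_series f g) = F f + F g"
  shows "F (smult_series c f) = c * F f"
proof -
  have of_int: "F (smult_series (of_int k) f) = of_int k * F f" for k :: int and f
  proof (induction k rule: int_induct[where k = 0])
    case base
    have "F zero_series = 0"
      using add[of zero_series zero_series] by simp
    then show ?case
      by simp
  next
    case (step1 i)
    have "smult_series (of_int (i + 1)) f = add_series (smult_series (of_int i) f) f"
      by (simp add: series_ops_def algebra_simps)
    with step1 show ?case
      by (simp add: add algebra_simps)
  next
    case (step2 i)
    have "smult_series (of_int i) f = add_series (smult_series (of_int (i - 1)) f) f"
      by (simp add: series_ops_def algebra_simps)
    with step2 show ?case
      by (simp add: add algebra_simps)
  qed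
  obtain p q where c: "c = of_int p / of_int q" and "q > 0"
    by (cases c) (simp add: Fract_of_int_quotient)
  have "of_int q * F (smult_series c f) = F (smult_series (of_int p) f)"
    using of_int[of q "smult_series c f"] \<open>q > 0\<close> by (simp add: c)
  then show ?thesis
    using \<open>q > 0\<close> by (simp add: of_int c field_simps)
qed

lemma BAC_upto_0_Pproduct: "BAC_upto 0 (Pproduct P)"
  by (simp add: BAC_upto_def agree_def series_ops_def algebra_simps)

lemma BAC_upto_Suc_Pproduct:
  assumes "special P" and "BAC_upto n (Pproduct P :: 'a series_op)"
  shows "BAC_upto (Suc n) (Pproduct P :: 'a series_op)"
proof -
  let ?m = "Pproduct P :: 'a series_op"
  note special = assms(1)[unfolded special_def term_equiv_def]
  note S1 = special[THEN conjunct1]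
    and S2 = special[THEN conjunct2, THEN conjunct1]
    and S3 = special[THEN conjunct2, THEN conjunct2]
  note transfer = agree_Suc_if_lderiv_poly_eq[OF congruent_upto_Pproduct assms(2)]
  have add: "agree (Suc n) (?m (add_series f g) h) (add_series (?m f h) (?m g h))" for f g h
  proof (rule transfer[OF S1, where \<sigma> = "\<lambda>a. sderiv_val a f g h"])
    show "?m (add_series f g) h [] = add_series (?m f h) (?m g h) []"
      by (simp add: series_ops_def algebra_simps)
  qed (simp_all add: sem_inst_Pproduct)
  have smult: "agree (Suc n) (?m (smult_series c f) g) (smult_series c (?m f g))" for c f g
    unfolding agree_def
  proof (intro allI impI)
    fix w :: "'a list"
    assume "length w \<le> Suc n"
    with add have "?m (add_series f f') g w = ?m f g w + ?m f' g w" for f f'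
      by (simp add: agree_def add_series_def)
    then show "?m (smult_series c f) g w = smult_series c (?m f g) w"
      using additive_homogeneous[of "\<lambda>f. ?m f g w"] by (simp add: smult_series_def)
  qed
  have assoc: "agree (Suc n) (?m f (?m g h)) (?m (?m f g) h)" for f g h
  proof (rule transfer[OF S2, where \<sigma> = "\<lambda>a. sderiv_val a f g h"])
    show "?m f (?m g h) [] = ?m (?m f g) h []"
      by (simp add: mult.assoc)
  qed (simp_all add: sem_inst_Pproduct)
  have commute: "agree (Suc n) (?m f g) (?m g f)" for f g
  proof (rule transfer[OF S3, where \<sigma> = "\<lambda>a. sderiv_val a f g f"])
    show "?m f g [] = ?m g f []"
      by (simp add: mult.commute)
  qed (simp_all add: sem_inst_Pproduct)
  show ?thesis
    unfolding BAC_upto_def by (intro conjI allI add smult assoc commute)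
qed

lemma BAC_upto_Pproduct: "special P \<Longrightarrow> BAC_upto n (Pproduct P)"
  by (induction n) (simp_all add: BAC_upto_0_Pproduct BAC_upto_Suc_Pproduct)

section \<open>BAC products have special product rules\<close>

definition init_series :: "rat \<Rightarrow> rat \<Rightarrow> 'a series" where
  "init_series c0 c1 = (\<lambda>w. if w = [] then c0 else c1)"

lemma eval_special_identities_if_BAC:
  fixes P :: prule and \<rho> :: "svar \<Rightarrow> rat"
  assumes "BAC (Pproduct P :: 'a series_op)"
  shows "eval_trm \<rho> (inst P (Plus (Var SX) (Var SY)) (Plus (Var SDX) (Var SDY)) (Var SZ) (Var SDZ)) =
      eval_trm \<rho> (Plus (inst P (Var SX) (Var SDX) (Var SZ) (Var SDZ))
        (inst P (Var SY) (Var SDY) (Var SZ) (Var SDZ)))"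
      (is "?lhs1 = ?rhs1")
    and "eval_trm \<rho> (inst P (Var SX) (Var SDX) (Times (Var SY) (Var SZ))
        (inst P (Var SY) (Var SDY) (Var SZ) (Var SDZ))) =
      eval_trm \<rho> (inst P (Times (Var SX) (Var SY)) (inst P (Var SX) (Var SDX) (Var SY) (Var SDY))
        (Var SZ) (Var SDZ))"
      (is "?lhs2 = ?rhs2")
    and "eval_trm \<rho> (inst P (Var SX) (Var SDX) (Var SY) (Var SDY)) =
      eval_trm \<rho> (inst P (Var SY) (Var SDY) (Var SX) (Var SDX))"
      (is "?lhs3 = ?rhs3")
proof -
  let ?m = "Pproduct P :: 'a series_op"
  interpret BAC_product ?m
    by unfold_locales (fact assms)
  fix a :: 'a
  let ?s = "\<lambda>u du. init_series (\<rho> u) (\<rho> du) :: 'a series"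
  have eval_inst_Var: "eval_trm \<rho> (inst P (Var u) (Var du) (Var v) (Var dv)) = ?m (?s u du) (?s v dv) [a]"
    for u du v dv
    by (rule eval_inst_Pproduct) (simp_all add: init_series_def)
  have "?lhs1 = ?m (add_series (?s SX SDX) (?s SY SDY)) (?s SZ SDZ) [a]"
    by (rule eval_inst_Pproduct) (simp_all add: init_series_def add_series_def)
  also have "\<dots> = add_series (?m (?s SX SDX) (?s SZ SDZ)) (?m (?s SY SDY) (?s SZ SDZ)) [a]"
    by (simp only: add_left)
  also have "\<dots> = ?rhs1"
    by (simp add: eval_inst_Var add_series_def)
  finally show "?lhs1 = ?rhs1" .
  have "?lhs2 = ?m (?s SX SDX) (?m (?s SY SDY) (?s SZ SDZ)) [a]"
    by (rule eval_inst_Pproduct) (simp_all add: eval_inst_Var init_series_def)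
  also have "\<dots> = ?m (?m (?s SX SDX) (?s SY SDY)) (?s SZ SDZ) [a]"
    by (simp only: assoc)
  also have "\<dots> = ?rhs2"
    by (rule eval_inst_Pproduct[symmetric]) (simp_all add: eval_inst_Var init_series_def)
  finally show "?lhs2 = ?rhs2" .
  show "?lhs3 = ?rhs3"
    by (simp only: eval_inst_Var commute)
qed

lemma special_if_BAC:
  assumes "BAC (Pproduct P :: 'a series_op)"
  shows "special P"
  unfolding special_def term_equiv_def
  using eval_special_identities_if_BAC[OF assms] by (intro conjI poly_of_eq_if_eval_eq) blast+

theorem theorem1:
  fixes P :: prule
  shows "BAC (Pproduct P :: ('a::finite) series \<Rightarrow> 'a series \<Rightarrow> 'a series) \<longleftrightarrow> special P"
  using special_if_BAC BAC_if_BAC_upto BAC_upto_Pproduct by blast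

end
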